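(* Let $\mathbb F\subseteq\mathbb R$ be a subfield and $X\subseteq\mathbb F^n$ such that $\operatorname{conv}_{\mathbb R}(X\cup\{0\})$ is a polyhedron. Then a nonempty subset $Y\subseteq X$ is a positive weak $\mathbb F$-face of $X$ if and only if there is a linear functional $\varphi\in(\mathbb R^n)^*$ which attains a maximum $M>0$ on $X$ with $Y=\{x\in X:\varphi(x)=M\}$. In particular, if $0$ lies in the relative interior of $\operatorname{conv}_{\mathbb R}(X)$, then a subset $Y\subseteq X$ is a positive weak $\mathbb F$-face of $X$ if and only if $Y\ne X$ and $Y$ is a weak $\mathbb F$-face of $X$.
   Context: $\operatorname{conv}_{\mathbb K}(X)$ ($\mathbb K=\mathbb F$ or $\mathbb R$) is the set of finite combinations $\sum r_sx_s$ with $x_s\in X$, $r_s\in\mathbb K\cap[0,\infty)$, $\sum r_s=1$; for $Y=\operatorname{conv}_{\mathbb K}(X)$, $\operatorname{relint}_{\mathbb K}(Y)=\{x\in Y:\forall y\in Y\ \exists z\in Y,\ t\in\mathbb K\cap(0,1),\ x=ty+(1-t)z\}$ (for $\mathbb K=\mathbb R$ and a polyhedron this is the usual relative interior). $Y\subseteq X$ is a weak $\mathbb F$-face of $X$ if for every $U\subseteq X$, $\operatorname{conv}_{\mathbb F}(Y)\cap\operatorname{relint}_{\mathbb F}(\operatorname{conv}_{\mathbb F}(U))\ne\emptyset$ implies $U\subseteq Y$; a weak $\mathbb F$-face $Y$ is a positive weak $\mathbb F$-face if for every $U\subseteq X$, $\operatorname{conv}_{\mathbb F}(Y)\cap\operatorname{relint}_{\mathbb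 F}(\operatorname{conv}_{\mathbb F}(U\cup\{0\}))=\emptyset$. A polyhedron is a finite intersection of closed affine half-spaces. *)

theory Defs
  imports "HOL-Analysis.Analysis"
begin

definition real_subfield :: "real set \<Rightarrow> bool" where
  "real_subfield F \<longleftrightarrow> 0 \<in> F \<and> 1 \<in> F \<and>
     (\<forall>a\<in>F. \<forall>b\<in>F. a + b \<in> F \<and> a - b \<in> F \<and> a * b \<in> F) \<and>
     (\<forall>a\<in>F. a \<noteq> 0 \<longrightarrow> inverse a \<in> F)"

definition coords_in :: "real set \<Rightarrow> (real ^ 'n) set" where
  "coords_in F = {x. \<forall>i. x $ i \<in> F}"

definition conv_K :: "real set \<Rightarrow> ('a::real_vector) set \<Rightarrow> 'a set" where
  "conv_K K X = {x. \<exists>S r. finite S \<and> S \<subseteq> X \<and> (\<forall>s\<in>S. r s \<in> K \<and> 0 \<le> r s) \<and>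
       sum r S = 1 \<and> x = (\<Sum>s\<in>S. r s *\<^sub>R s)}"

definition relint_K :: "real set \<Rightarrow> ('a::real_vector) set \<Rightarrow> 'a set" where
  "relint_K K Y = {x \<in> Y. \<forall>y\<in>Y. \<exists>z\<in>Y. \<exists>t. t \<in> K \<and> 0 < t \<and> t < 1 \<and>
       x = t *\<^sub>R y + (1 - t) *\<^sub>R z}"

definition weak_face :: "real set \<Rightarrow> ('a::real_vector) set \<Rightarrow> 'a set \<Rightarrow> bool" where
  "weak_face F Y X \<longleftrightarrow> Y \<subseteq> X \<and>
     (\<forall>U. U \<subseteq> X \<longrightarrow> conv_K F Y \<inter> relint_K F (conv_K F U) \<noteq> {} \<longrightarrow> U \<subseteq> Y)"

definition positive_weak_face :: "real set \<Rightarrow> ('a::real_vector) set \<Rightarrow> 'a set \<Rightarrow> bool" where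
  "positive_weak_face F Y X \<longleftrightarrow> weak_face F Y X \<and>
     (\<forall>U. U \<subseteq> X \<longrightarrow> conv_K F Y \<inter> relint_K F (conv_K F (U \<union> {0})) = {})"

end

theory Submission
  imports Defs
begin

(* The easy direction: if a linear functional phi attains its maximum M > 0 over X exactly on
   Y, then any proper F-combination through a point u, whose relative F-interior meets
   conv_F(Y), forces phi(u) = M, and a combination through 0 would force M = 0.
   The hard direction rests on one construction (lemma exposing_functional).  Write conv(Z) as
   a finite intersection of half-spaces, sum the inequalities tight on all of Y to get phi, M,
   and let p be the barycentre of finitely many points of Y witnessing that the remaining
   inequalities are not tight on Y.  For every x in Z with phi(x) = M, the point p can be
   pushed slightly beyond itself away from x within conv(Z), which writes p as a strictly
   positive real combination of points U of Z containing x.  Since all points lie in F^n, a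
   density argument for solutions of linear systems over the subfield F (Gaussian elimination,
   F_approximable_finite) re-weights this identity with coefficients in F, so conv_F(Y) meets
   the relative F-interior of conv_F(U).  Applied to Z = X with 0 added, positivity of the face
   excludes 0 from U and the weak face property gives U inside Y, so phi exposes Y with M > 0.
   The second statement follows from the first, using that 0 in the relative interior of
   conv(X) forces the maximum of a non-constant functional to be positive. *)

lemma subfield_0: "real_subfield F \<Longrightarrow> 0 \<in> F"
  and subfield_1: "real_subfield F \<Longrightarrow> 1 \<in> F"
  and subfield_add: "real_subfield F \<Longrightarrow> a \<in> F \<Longrightarrow> b \<in> F \<Longrightarrow> a + b \<in> F"
  and subfield_diff: "real_subfield F \<Longrightarrow> a \<in> F \<Longrightarrow> b \<in> F \<Longrightarrow> a - b \<in> F"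
  and subfield_mult: "real_subfield F \<Longrightarrow> a \<in> F \<Longrightarrow> b \<in> F \<Longrightarrow> a * b \<in> F"
  by (simp_all add: real_subfield_def)

lemma subfield_divide: "real_subfield F \<Longrightarrow> a \<in> F \<Longrightarrow> b \<in> F \<Longrightarrow> a / b \<in> F"
  by (cases "b = 0") (auto simp: real_subfield_def divide_inverse)

lemma subfield_uminus: "real_subfield F \<Longrightarrow> a \<in> F \<Longrightarrow> - a \<in> F"
  using subfield_diff[of F 0 a] subfield_0 by simp

lemma subfield_sum: "real_subfield F \<Longrightarrow> (\<And>t. t \<in> T \<Longrightarrow> f t \<in> F) \<Longrightarrow> sum f T \<in> F"
  by (induction T rule: infinite_finite_induct) (auto simp: subfield_0 subfield_add)

lemma subfield_Rats:
  assumes F: "real_subfield F" and r: "r \<in> \<rat>"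
  shows "r \<in> F"
proof -
  have nat: "real n \<in> F" for n
    by (induction n) (auto simp: F subfield_0 subfield_1 subfield_add)
  have int: "real_of_int i \<in> F" for i
    by (cases i rule: int_cases2) (auto simp: F nat subfield_uminus)
  show "r \<in> F" using r by (auto elim!: Rats_cases' simp: F int subfield_divide)
qed

text \<open>\<open>F_approximable F K T\<close>: every real solution of a homogeneous linear system with
  coefficients in \<open>F\<close> (rows \<open>K\<close>, unknowns \<open>T\<close>) is a limit of solutions with entries in \<open>F\<close>.\<close>
definition F_approximable :: "real set \<Rightarrow> 'k set \<Rightarrow> 't set \<Rightarrow> bool" where
  "F_approximable F K T \<longleftrightarrow> (\<forall>v c \<epsilon>. (\<forall>k\<in>K. \<forall>t\<in>T. v k t \<in> F) \<longrightarrow>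
     (\<forall>k\<in>K. (\<Sum>t\<in>T. c t * v k t) = 0) \<longrightarrow> \<epsilon> > 0 \<longrightarrow>
     (\<exists>d. (\<forall>t\<in>T. d t \<in> F \<and> \<bar>d t - c t\<bar> < \<epsilon>) \<and> (\<forall>k\<in>K. (\<Sum>t\<in>T. d t * v k t) = 0)))"

text \<open>A new unknown that occurs in no equation is free: approximate it by a rational.\<close>
lemma F_approximable_insert_free:
  assumes F: "real_subfield F" and T: "finite T" "t0 \<notin> T" and IH: "F_approximable F K T"
    and vF: "\<forall>k\<in>K. \<forall>t\<in>insert t0 T. v k t \<in> F"
    and c: "\<forall>k\<in>K. (\<Sum>t\<in>insert t0 T. c t * v k t) = 0" and \<epsilon>: "\<epsilon> > 0"
    and free: "\<forall>k\<in>K. v k t0 = 0"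
  shows "\<exists>d. (\<forall>t\<in>insert t0 T. d t \<in> F \<and> \<bar>d t - c t\<bar> < \<epsilon>) \<and>
    (\<forall>k\<in>K. (\<Sum>t\<in>insert t0 T. d t * v k t) = 0)"
proof -
  have "\<forall>k\<in>K. (\<Sum>t\<in>T. c t * v k t) = 0" using c free T by simp
  then obtain d where d: "\<forall>t\<in>T. d t \<in> F \<and> \<bar>d t - c t\<bar> < \<epsilon>"
    "\<forall>k\<in>K. (\<Sum>t\<in>T. d t * v k t) = 0"
    using IH vF \<epsilon> unfolding F_approximable_def by blast
  obtain r where r: "r \<in> \<rat>" "c t0 - \<epsilon> < r" "r < c t0 + \<epsilon>"
    using Rats_dense_in_real[of "c t0 - \<epsilon>" "c t0 + \<epsilon>"] \<epsilon> by auto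
  have same: "(\<Sum>t\<in>T. (if t = t0 then r else d t) * v k t) = (\<Sum>t\<in>T. d t * v k t)" for k
    using T by (intro sum.cong) auto
  show ?thesis
    using d r subfield_Rats[OF F r(1)] T free
    by (intro exI[of _ "d(t0 := r)"]) (auto simp: same)
qed

text \<open>Otherwise some equation \<open>k0\<close> contains \<open>t0\<close> with a nonzero coefficient \<open>a\<close>: eliminate
  \<open>t0\<close> from all other equations, approximate a solution of the reduced system (on \<open>T\<close>) and
  recover \<open>t0\<close> from equation \<open>k0\<close>. The error in \<open>t0\<close> is controlled by the errors on \<open>T\<close>.\<close>
lemma F_approximable_insert_pivot:
  assumes F: "real_subfield F" and T: "finite T" "t0 \<notin> T" and IH: "F_approximable F K T"
    and vF: "\<forall>k\<in>K. \<forall>t\<in>insert t0 T. v k t \<in> F"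
    and c: "\<forall>k\<in>K. (\<Sum>t\<in>insert t0 T. c t * v k t) = 0" and \<epsilon>: "\<epsilon> > 0"
    and k0: "k0 \<in> K" "v k0 t0 \<noteq> 0"
  shows "\<exists>d. (\<forall>t\<in>insert t0 T. d t \<in> F \<and> \<bar>d t - c t\<bar> < \<epsilon>) \<and>
    (\<forall>k\<in>K. (\<Sum>t\<in>insert t0 T. d t * v k t) = 0)"
proof -
  define a where "a = v k0 t0"
  have a: "a \<noteq> 0" "a \<in> F" using k0 vF by (auto simp: a_def)
  define solve where "solve x = - (\<Sum>t\<in>T. x t * v k0 t) / a" for x
  define v' where "v' k t = v k t - v k0 t * v k t0 / a" for k t
  have reduced: "(\<Sum>t\<in>T. x t * v' k t) = (\<Sum>t\<in>insert t0 T. (x(t0 := solve x)) t * v k t)"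
    for x k
  proof -
    have "(\<Sum>t\<in>T. x t * v' k t) = (\<Sum>t\<in>T. x t * v k t) + solve x * v k t0"
      by (simp add: v'_def solve_def sum_subtractf right_diff_distrib sum_divide_distrib
          sum_distrib_right mult.assoc)
    also have "(\<Sum>t\<in>T. x t * v k t) = (\<Sum>t\<in>T. (x(t0 := solve x)) t * v k t)"
      using T by (intro sum.cong) auto
    finally show ?thesis using T by (simp add: add.commute)
  qed
  have c_t0: "c t0 = solve c"
  proof -
    have "c t0 * a + (\<Sum>t\<in>T. c t * v k0 t) = 0" using c k0 T by (simp add: a_def)
    then show ?thesis using a by (simp add: solve_def field_simps)
  qed
  have "c(t0 := solve c) = c" using c_t0 by auto
  then have c': "\<forall>k\<in>K. (\<Sum>t\<in>T. c t * v' k t) = 0" using c by (simp add: reduced)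
  have v'F: "\<forall>k\<in>K. \<forall>t\<in>T. v' k t \<in> F"
    using vF k0 a by (auto simp: v'_def intro!: subfield_diff[OF F] subfield_mult[OF F]
        subfield_divide[OF F])
  define B where "B = (\<Sum>t\<in>T. \<bar>v k0 t\<bar>) / \<bar>a\<bar>"
  define \<delta> where "\<delta> = \<epsilon> / (1 + B)"
  have B: "B \<ge> 0" by (simp add: B_def sum_nonneg)
  then have \<delta>: "\<delta> > 0" "\<delta> \<le> \<epsilon>" "\<delta> * B < \<epsilon>" using \<epsilon> by (auto simp: \<delta>_def field_simps)
  obtain d where d: "\<forall>t\<in>T. d t \<in> F \<and> \<bar>d t - c t\<bar> < \<delta>" "\<forall>k\<in>K. (\<Sum>t\<in>T. d t * v' k t) = 0"
    using IH v'F c' \<delta>(1) unfolding F_approximable_def by blast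
  have "\<bar>solve d - solve c\<bar> = \<bar>\<Sum>t\<in>T. (d t - c t) * v k0 t\<bar> / \<bar>a\<bar>"
    by (simp add: solve_def sum_subtractf left_diff_distrib abs_divide abs_minus_commute
        flip: diff_divide_distrib)
  also have "\<dots> \<le> (\<Sum>t\<in>T. \<delta> * \<bar>v k0 t\<bar>) / \<bar>a\<bar>"
    using d(1) by (intro divide_right_mono order.trans[OF sum_abs] sum_mono)
      (auto simp: abs_mult intro!: mult_right_mono)
  also have "\<dots> = \<delta> * B" by (simp add: B_def sum_distrib_left)
  finally have close: "\<bar>solve d - c t0\<bar> < \<epsilon>" using \<delta>(3) c_t0 by simp
  have "solve d \<in> F" using d(1) vF k0 a unfolding solve_def
    by (auto intro!: subfield_divide[OF F] subfield_uminus[OF F] subfield_sum[OF F]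
        subfield_mult[OF F])
  moreover have "\<forall>k\<in>K. (\<Sum>t\<in>insert t0 T. (d(t0 := solve d)) t * v k t) = 0"
    using d(2) by (simp only: reduced[symmetric])
  ultimately show ?thesis using d(1) close \<delta>(2)
    by (intro exI[of _ "d(t0 := solve d)"]) auto
qed

lemma F_approximable_finite:
  assumes F: "real_subfield F" and T: "finite T"
  shows "F_approximable F K T"
  using T
proof (induction T rule: finite_induct)
  case empty
  then show ?case by (auto simp: F_approximable_def)
next
  case (insert t0 T)
  show ?case unfolding F_approximable_def
  proof (intro allI impI)
    fix v c and \<epsilon> :: real
    assume "\<forall>k\<in>K. \<forall>t\<in>insert t0 T. v k t \<in> F" "\<forall>k\<in>K. (\<Sum>t\<in>insert t0 T. c t * v k t) = 0"
      "\<epsilon> > 0"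
    then show "\<exists>d. (\<forall>t\<in>insert t0 T. d t \<in> F \<and> \<bar>d t - c t\<bar> < \<epsilon>) \<and>
        (\<forall>k\<in>K. (\<Sum>t\<in>insert t0 T. d t * v k t) = 0)"
      using F_approximable_insert_free[OF F insert.hyps insert.IH]
        F_approximable_insert_pivot[OF F insert.hyps insert.IH] by blast
  qed
qed

lemma subfield_solution_approximation:
  assumes "real_subfield F" "finite T" "\<forall>k\<in>K. \<forall>t\<in>T. v k t \<in> F"
    "\<forall>k\<in>K. (\<Sum>t\<in>T. c t * v k t) = 0" "\<epsilon> > 0"
  obtains d where "\<forall>t\<in>T. d t \<in> F \<and> \<bar>d t - c t\<bar> < \<epsilon>" "\<forall>k\<in>K. (\<Sum>t\<in>T. d t * v k t) = 0"
  using F_approximable_finite[OF assms(1,2), unfolded F_approximable_def,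
      rule_format (no_asm), OF assms(3-5)] by blast

text \<open>Homogeneous coordinates of \<open>u \<in> \<real>\<^sup>n\<close>: the coordinates of \<open>(u, 1) \<in> \<real>\<^sup>n\<^sup>+\<^sup>1\<close>.\<close>
definition homog_coord :: "'n option \<Rightarrow> real ^ 'n \<Rightarrow> real" where
  "homog_coord k u = (case k of None \<Rightarrow> 1 | Some i \<Rightarrow> u $ i)"

text \<open>The linear system expressing that two weightings of \<open>U\<close> and \<open>S\<close> have the same total
  weight and the same weighted sum; its unknowns are indexed by the disjoint union \<open>U <+> S\<close>.\<close>
definition balance_row :: "'n option \<Rightarrow> real ^ 'n + real ^ 'n \<Rightarrow> real" where
  "balance_row k = case_sum (homog_coord k) (\<lambda>s. - homog_coord k s)"

lemma balance_system_iff: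
  fixes U S :: "(real ^ 'n) set"
  assumes "finite U" "finite S"
  shows "(\<forall>k. (\<Sum>t\<in>U <+> S. x t * balance_row k t) = 0) \<longleftrightarrow>
    (\<Sum>u\<in>U. x (Inl u) *\<^sub>R u) = (\<Sum>s\<in>S. x (Inr s) *\<^sub>R s) \<and>
    (\<Sum>u\<in>U. x (Inl u)) = (\<Sum>s\<in>S. x (Inr s))"
proof -
  have row: "(\<Sum>t\<in>U <+> S. x t * balance_row k t) =
      (\<Sum>u\<in>U. x (Inl u) * homog_coord k u) - (\<Sum>s\<in>S. x (Inr s) * homog_coord k s)" for k
    using assms by (simp add: sum.Plus balance_row_def sum_negf)
  show ?thesis
    unfolding row split_option_all by (simp add: homog_coord_def vec_eq_iff sum_component conj_commute)
qed

lemma balance_row_in_subfield: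
  assumes F: "real_subfield F" and "U \<subseteq> coords_in F" "S \<subseteq> coords_in F" "t \<in> U <+> S"
  shows "balance_row k t \<in> F"
  using assms subfield_1[OF F] subfield_uminus[OF F]
  by (auto simp: balance_row_def homog_coord_def coords_in_def split: option.split)

lemma subfield_reweighting:
  fixes U S :: "(real ^ 'n) set"
  assumes F: "real_subfield F" and fin: "finite U" "finite S"
    and UF: "U \<subseteq> coords_in F" and SF: "S \<subseteq> coords_in F"
    and \<beta>: "\<forall>u\<in>U. \<beta> u > 0" "sum \<beta> U = 1"
    and \<alpha>: "\<forall>s\<in>S. \<alpha> s > 0" "sum \<alpha> S = 1"
    and eq: "(\<Sum>u\<in>U. \<beta> u *\<^sub>R u) = (\<Sum>s\<in>S. \<alpha> s *\<^sub>R s)"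
  shows "\<exists>\<beta>' \<alpha>'. (\<forall>u\<in>U. \<beta>' u \<in> F \<and> \<beta>' u > 0) \<and> sum \<beta>' U = 1 \<and>
     (\<forall>s\<in>S. \<alpha>' s \<in> F \<and> \<alpha>' s \<ge> 0) \<and> sum \<alpha>' S = 1 \<and>
     (\<Sum>u\<in>U. \<beta>' u *\<^sub>R u) = (\<Sum>s\<in>S. \<alpha>' s *\<^sub>R s)"
proof -
  define T where "T = U <+> S"
  define c where "c = case_sum \<beta> \<alpha>"
  have T: "finite T" "T \<noteq> {}" using fin \<beta>(2) by (auto simp: T_def)
  have c_pos: "\<forall>t\<in>T. c t > 0" using \<beta> \<alpha> by (auto simp: T_def c_def)
  define m where "m = Min (c ` T)"
  have m: "m > 0" "\<forall>t\<in>T. m \<le> c t" using c_pos T by (auto simp: m_def)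
  have sol: "\<forall>k\<in>UNIV. (\<Sum>t\<in>T. c t * balance_row k t) = 0"
    using balance_system_iff[OF fin, of c] eq \<beta>(2) \<alpha>(2) by (simp add: T_def c_def)
  have rows: "\<forall>k\<in>UNIV. \<forall>t\<in>T. balance_row k t \<in> F"
    using balance_row_in_subfield[OF F UF SF] by (simp add: T_def)
  obtain d where d: "\<forall>t\<in>T. d t \<in> F \<and> \<bar>d t - c t\<bar> < m"
      "\<forall>k\<in>UNIV. (\<Sum>t\<in>T. d t * balance_row k t) = 0"
    using subfield_solution_approximation[OF F T(1) rows sol m(1)] by blast
  have "\<forall>t\<in>T. d t > 0" using d(1) m(2) by fastforce
  then have dU: "\<forall>u\<in>U. d (Inl u) \<in> F \<and> d (Inl u) > 0"
    and dS: "\<forall>s\<in>S. d (Inr s) \<in> F \<and> d (Inr s) > 0" using d(1) by (auto simp: T_def)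
  have comb: "(\<Sum>u\<in>U. d (Inl u) *\<^sub>R u) = (\<Sum>s\<in>S. d (Inr s) *\<^sub>R s)"
    and total: "(\<Sum>u\<in>U. d (Inl u)) = (\<Sum>s\<in>S. d (Inr s))"
    using d(2) balance_system_iff[OF fin, of d] by (auto simp: T_def)
  define D where "D = (\<Sum>u\<in>U. d (Inl u))"
  have D: "D > 0" "D \<in> F"
    using dU fin \<beta>(2) by (auto simp: D_def intro!: sum_pos subfield_sum[OF F])
  show ?thesis
  proof (intro exI conjI)
    show "\<forall>u\<in>U. d (Inl u) / D \<in> F \<and> d (Inl u) / D > 0"
      using dU D by (auto intro!: subfield_divide[OF F])
    show "\<forall>s\<in>S. d (Inr s) / D \<in> F \<and> d (Inr s) / D \<ge> 0"
      using dS D by (auto intro!: subfield_divide[OF F])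
    show "(\<Sum>u\<in>U. d (Inl u) / D) = 1" "(\<Sum>s\<in>S. d (Inr s) / D) = 1"
      using D total by (simp_all add: D_def flip: sum_divide_distrib)
    show "(\<Sum>u\<in>U. (d (Inl u) / D) *\<^sub>R u) = (\<Sum>s\<in>S. (d (Inr s) / D) *\<^sub>R s)"
    proof -
      have "(\<Sum>u\<in>U. (d (Inl u) / D) *\<^sub>R u) = inverse D *\<^sub>R (\<Sum>u\<in>U. d (Inl u) *\<^sub>R u)"
        by (simp add: scaleR_sum_right divide_inverse mult.commute)
      also have "\<dots> = (\<Sum>s\<in>S. (d (Inr s) / D) *\<^sub>R s)"
        by (simp add: comb scaleR_sum_right divide_inverse mult.commute)
      finally show ?thesis .
    qed
  qed
qed

definition meets_relint :: "real set \<Rightarrow> ('a::real_vector) set \<Rightarrow> 'a set \<Rightarrow> bool" where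
  "meets_relint F Y U \<longleftrightarrow> conv_K F Y \<inter> relint_K F (conv_K F U) \<noteq> {}"

lemma weak_face_iff:
  "weak_face F Y X \<longleftrightarrow> Y \<subseteq> X \<and> (\<forall>U. U \<subseteq> X \<longrightarrow> meets_relint F Y U \<longrightarrow> U \<subseteq> Y)"
  by (simp add: weak_face_def meets_relint_def)

lemma positive_weak_face_iff:
  "positive_weak_face F Y X \<longleftrightarrow>
    weak_face F Y X \<and> (\<forall>U. U \<subseteq> X \<longrightarrow> \<not> meets_relint F Y (U \<union> {0}))"
  by (simp add: positive_weak_face_def meets_relint_def)

lemma conv_K_empty: "conv_K K {} = {}"
  unfolding conv_K_def by auto

lemma conv_K_UNIV: "conv_K UNIV X = convex hull X"
  unfolding conv_K_def convex_hull_explicit by auto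

lemma conv_K_single: "1 \<in> K \<Longrightarrow> u \<in> A \<Longrightarrow> u \<in> conv_K K A"
  unfolding conv_K_def by (intro CollectI exI[of _ "{u}"] exI[of _ "\<lambda>_. 1"]) auto

lemma conv_K_functional:
  fixes \<phi> :: "'a::real_vector \<Rightarrow> real"
  assumes lin: "linear \<phi>" and z: "z \<in> conv_K K A"
  shows "(\<forall>s\<in>A. \<phi> s \<le> M) \<Longrightarrow> \<phi> z \<le> M" and "(\<forall>s\<in>A. \<phi> s = M) \<Longrightarrow> \<phi> z = M"
proof -
  obtain S r where S: "finite S" "S \<subseteq> A" "\<forall>s\<in>S. 0 \<le> r s" "sum r S = 1"
    "z = (\<Sum>s\<in>S. r s *\<^sub>R s)" using z unfolding conv_K_def by blast
  have \<phi>z: "\<phi> z = (\<Sum>s\<in>S. r s * \<phi> s)"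
    using S(5) lin by (simp add: linear_sum linear_scale)
  have M: "M = (\<Sum>s\<in>S. r s * M)" using S(4) by (simp flip: sum_distrib_right)
  show "(\<forall>s\<in>A. \<phi> s \<le> M) \<Longrightarrow> \<phi> z \<le> M"
    unfolding \<phi>z by (subst M) (use S in \<open>auto intro!: sum_mono mult_left_mono\<close>)
  show "(\<forall>s\<in>A. \<phi> s = M) \<Longrightarrow> \<phi> z = M"
    unfolding \<phi>z by (subst M) (use S in \<open>auto intro!: sum.cong\<close>)
qed

text \<open>A point of \<open>conv_F Y\<close> has value \<open>M\<close>,
  while writing it as a proper combination through some \<open>u\<close> forces \<open>u\<close> to have value \<open>M\<close>, too
  (and through \<open>0\<close> it would force \<open>M = 0\<close>).\<close>
lemma exposed_positive_weak_face:
  fixes \<phi> :: "'a::real_vector \<Rightarrow> real"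
  assumes F: "real_subfield F" and lin: "linear \<phi>" and M: "M > 0"
    and le: "\<forall>x\<in>X. \<phi> x \<le> M" and Y: "Y = {x \<in> X. \<phi> x = M}"
  shows "positive_weak_face F Y X"
proof -
  have through: "\<phi> u = M"
    if U: "\<forall>s\<in>U. \<phi> s \<le> M" and u: "u \<in> U" and meets: "meets_relint F Y U" for U u
  proof -
    obtain p where p: "p \<in> conv_K F Y" "p \<in> relint_K F (conv_K F U)"
      using meets unfolding meets_relint_def by blast
    have "\<phi> p = M" using conv_K_functional(2)[OF lin p(1)] Y by blast
    obtain z t where zt: "z \<in> conv_K F U" "0 < t" "t < 1" "p = t *\<^sub>R u + (1 - t) *\<^sub>R z"
      using p(2) conv_K_single[OF subfield_1[OF F] u] unfolding relint_K_def by blast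
    have "\<phi> z \<le> M" using conv_K_functional(1)[OF lin zt(1)] U by blast
    have "M = t * \<phi> u + (1 - t) * \<phi> z"
      using \<open>\<phi> p = M\<close> zt(4) lin by (simp add: linear_add linear_scale)
    also have "\<dots> \<le> t * \<phi> u + (1 - t) * M"
      using \<open>\<phi> z \<le> M\<close> zt(3) by (simp add: mult_left_mono)
    finally have "t * M \<le> t * \<phi> u" by (simp add: algebra_simps)
    then show "\<phi> u = M" using zt(2) U u by (simp add: mult_le_cancel_left_pos order_antisym)
  qed
  have "weak_face F Y X"
    unfolding weak_face_iff using Y le through by blast
  moreover have "\<not> meets_relint F Y (U \<union> {0})" if "U \<subseteq> X" for U
    using through[of "U \<union> {0}" 0] that le M lin by (auto simp: linear_0)
  ultimately show ?thesis unfolding positive_weak_face_iff by blast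
qed

lemma conv_K_finite:
  assumes K: "0 \<in> K" and fin: "finite U" and w: "w \<in> conv_K K U"
  obtains r where "\<forall>u\<in>U. r u \<in> K \<and> 0 \<le> r u" "sum r U = 1" "w = (\<Sum>u\<in>U. r u *\<^sub>R u)"
proof -
  obtain S r where S: "finite S" "S \<subseteq> U" "\<forall>s\<in>S. r s \<in> K \<and> 0 \<le> r s" "sum r S = 1"
    "w = (\<Sum>s\<in>S. r s *\<^sub>R s)" using w unfolding conv_K_def by blast
  define r' where "r' u = (if u \<in> S then r u else 0)" for u
  have "sum r' U = sum r S" "(\<Sum>u\<in>U. r' u *\<^sub>R u) = (\<Sum>s\<in>S. r s *\<^sub>R s)"
    using S(2) fin by (simp_all add: r'_def if_distrib[of "\<lambda>x. x *\<^sub>R _"] sum.If_cases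
        Int_absorb1 cong: if_cong)
  then show ?thesis using that[of r'] S K by (auto simp: r'_def)
qed

text \<open>A convex combination with strictly positive coefficients in \<open>F\<close> lies in the relative
  \<open>F\<close>-interior of \<open>conv_F U\<close>: for any \<open>w \<in> conv_F U\<close> and \<open>t\<close> below half the least coefficient,
  \<open>p - t w\<close> still has nonnegative coefficients.\<close>
lemma positive_combination_relint_K:
  assumes F: "real_subfield F" and fin: "finite U" and \<beta>: "\<forall>u\<in>U. \<beta> u \<in> F \<and> \<beta> u > 0"
    and \<beta>1: "sum \<beta> U = 1"
  shows "(\<Sum>u\<in>U. \<beta> u *\<^sub>R u) \<in> relint_K F (conv_K F U)"
proof -
  let ?p = "\<Sum>u\<in>U. \<beta> u *\<^sub>R u"
  have U: "U \<noteq> {}" using \<beta>1 by auto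
  have p: "?p \<in> conv_K F U" unfolding conv_K_def
    using fin \<beta> \<beta>1 by (intro CollectI exI[of _ U] exI[of _ \<beta>]) auto
  define t where "t = Min (\<beta> ` U) / 2"
  have "Min (\<beta> ` U) \<in> \<beta> ` U" "\<forall>u\<in>U. Min (\<beta> ` U) \<le> \<beta> u" using fin U by simp_all
  then have t: "t \<in> F" "0 < t" "\<forall>u\<in>U. t < \<beta> u"
    using \<beta> fin subfield_divide[OF F _ subfield_add[OF F subfield_1[OF F] subfield_1[OF F]]]
    by (fastforce simp: t_def)+
  have "t < 1" using t(3) U fin \<beta> \<beta>1 member_le_sum[of _ U \<beta>] by force
  have "\<exists>z\<in>conv_K F U. ?p = t *\<^sub>R w + (1 - t) *\<^sub>R z" if w: "w \<in> conv_K F U" for w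
  proof -
    obtain r where r: "\<forall>u\<in>U. r u \<in> F \<and> 0 \<le> r u" "sum r U = 1" "w = (\<Sum>u\<in>U. r u *\<^sub>R u)"
      using conv_K_finite[OF subfield_0[OF F] fin w] by blast
    have small: "t * r u < \<beta> u" if u: "u \<in> U" for u
    proof -
      have "r u \<le> 1" using member_le_sum[of u U r] r fin u by auto
      then have "t * r u \<le> t" using mult_left_le[of "r u" t] t(2) by simp
      then show ?thesis using t(3) u by (meson order_le_less_trans)
    qed
    define \<gamma> where "\<gamma> u = (\<beta> u - t * r u) / (1 - t)" for u
    have \<gamma>F: "\<gamma> u \<in> F \<and> 0 \<le> \<gamma> u" if u: "u \<in> U" for u
    proof -
      have "0 \<le> \<beta> u - t * r u" using small[OF u] by simp
      moreover have "\<beta> u - t * r u \<in> F" "1 - t \<in> F"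
        using \<beta> r(1) t(1) u subfield_1[OF F] by (auto intro!: subfield_diff[OF F] subfield_mult[OF F])
      ultimately show ?thesis using \<open>t < 1\<close> by (simp add: \<gamma>_def subfield_divide[OF F])
    qed
    have \<gamma>1: "sum \<gamma> U = 1"
      unfolding \<gamma>_def using \<beta>1 r(2) \<open>t < 1\<close>
      by (simp add: sum_subtractf flip: sum_divide_distrib sum_distrib_left)
    define z where "z = (\<Sum>u\<in>U. \<gamma> u *\<^sub>R u)"
    have "(1 - t) *\<^sub>R z = ?p - t *\<^sub>R w"
      using \<open>t < 1\<close> by (simp add: z_def \<gamma>_def scaleR_sum_right r(3) scaleR_diff_left sum_subtractf)
    then have "?p = t *\<^sub>R w + (1 - t) *\<^sub>R z" by simp
    moreover have "z \<in> conv_K F U" unfolding conv_K_def z_def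
      using fin \<gamma>F \<gamma>1 by (intro CollectI exI[of _ U] exI[of _ \<gamma>]) auto
    ultimately show ?thesis by blast
  qed
  then show ?thesis using p t \<open>t < 1\<close> unfolding relint_K_def by blast
qed

lemma polyhedron_inequalities:
  assumes "polyhedron P"
  obtains H and a :: "'i set \<Rightarrow> 'i::euclidean_space" and b
  where "finite H" "P = {x. \<forall>h\<in>H. a h \<bullet> x \<le> b h}"
proof -
  obtain H a b where "finite H" "P = \<Inter> H" "\<And>h. h \<in> H \<Longrightarrow> a h \<noteq> 0 \<and> h = {x. a h \<bullet> x \<le> b h}"
    using assms unfolding polyhedron_def by metis
  then show ?thesis using that[of H a b] by auto
qed

lemma sum_inequalities:
  fixes a :: "'j \<Rightarrow> 'a::real_inner"
  assumes "finite J" "\<forall>h\<in>J. a h \<bullet> x \<le> b h"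
  shows "(\<Sum>h\<in>J. a h) \<bullet> x \<le> sum b J"
    and "(\<Sum>h\<in>J. a h) \<bullet> x = sum b J \<longleftrightarrow> (\<forall>h\<in>J. a h \<bullet> x = b h)"
proof -
  have slack: "sum b J - (\<Sum>h\<in>J. a h) \<bullet> x = (\<Sum>h\<in>J. b h - a h \<bullet> x)"
    by (simp add: inner_sum_left sum_subtractf)
  show "(\<Sum>h\<in>J. a h) \<bullet> x \<le> sum b J"
    using assms by (simp add: inner_sum_left sum_mono)
  have "(\<Sum>h\<in>J. a h) \<bullet> x = sum b J \<longleftrightarrow> (\<Sum>h\<in>J. b h - a h \<bullet> x) = 0"
    using slack by linarith
  also have "\<dots> \<longleftrightarrow> (\<forall>h\<in>J. b h - a h \<bullet> x = 0)"
    using assms by (intro sum_nonneg_eq_0_iff) auto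
  also have "\<dots> \<longleftrightarrow> (\<forall>h\<in>J. a h \<bullet> x = b h)" by auto
  finally show "(\<Sum>h\<in>J. a h) \<bullet> x = sum b J \<longleftrightarrow> (\<forall>h\<in>J. a h \<bullet> x = b h)" .
qed

definition barycentre :: "'a::real_vector set \<Rightarrow> 'a" where
  "barycentre S = (\<Sum>s\<in>S. (1 / real (card S)) *\<^sub>R s)"

lemma barycentre_strict:
  fixes Y :: "'a::real_inner set"
  assumes H: "finite H" and Y: "Y \<noteq> {}" "\<forall>y\<in>Y. \<forall>h\<in>H. a h \<bullet> y \<le> b h"
  defines "J \<equiv> {h\<in>H. \<forall>y\<in>Y. a h \<bullet> y = b h}"
  obtains S where "finite S" "S \<subseteq> Y" "S \<noteq> {}" "\<forall>h\<in>J. a h \<bullet> barycentre S = b h"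
    "\<forall>h\<in>H - J. a h \<bullet> barycentre S < b h"
proof -
  have "\<forall>h\<in>H - J. \<exists>y\<in>Y. a h \<bullet> y < b h" using Y(2) by (force simp: J_def)
  then obtain wit where wit: "\<forall>h\<in>H - J. wit h \<in> Y \<and> a h \<bullet> wit h < b h" by metis
  obtain y0 where "y0 \<in> Y" using Y by auto
  define S where "S = insert y0 (wit ` (H - J))"
  have S: "finite S" "S \<subseteq> Y" "S \<noteq> {}" using H wit \<open>y0 \<in> Y\<close> by (auto simp: S_def)
  then have card: "real (card S) > 0" by (simp add: card_gt_0_iff)
  have avg: "a h \<bullet> barycentre S = (\<Sum>s\<in>S. a h \<bullet> s) / real (card S)" for h
    by (simp add: barycentre_def inner_sum_right sum_divide_distrib)
  have "a h \<bullet> barycentre S = b h" if h: "h \<in> J" for h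
  proof -
    have "(\<Sum>s\<in>S. a h \<bullet> s) = (\<Sum>s\<in>S. b h)" using S(2) h by (intro sum.cong) (auto simp: J_def)
    then show ?thesis using card by (simp add: avg)
  qed
  moreover have "a h \<bullet> barycentre S < b h" if h: "h \<in> H - J" for h
  proof -
    have "(\<Sum>s\<in>S. a h \<bullet> s) < (\<Sum>s\<in>S. b h)"
      using Y(2) S wit h by (intro sum_strict_mono_ex1) (auto simp: S_def)
    then show ?thesis using card by (simp add: avg field_simps)
  qed
  ultimately show ?thesis using that S by blast
qed

lemma move_beyond:
  fixes p x :: "'a::real_inner"
  assumes H: "finite H" and J: "\<forall>h\<in>J. a h \<bullet> p = b h \<and> a h \<bullet> x = b h"
    and strict: "\<forall>h\<in>H - J. a h \<bullet> p < b h"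
  obtains \<epsilon> where "\<epsilon> > 0" "\<forall>h\<in>H. a h \<bullet> (p + \<epsilon> *\<^sub>R (p - x)) \<le> b h"
proof -
  have "\<forall>h\<in>H - J. eventually (\<lambda>\<epsilon>. a h \<bullet> (p + \<epsilon> *\<^sub>R (p - x)) < b h) (at_right 0)"
  proof
    fix h assume "h \<in> H - J"
    have "((\<lambda>\<epsilon>::real. a h \<bullet> (p + \<epsilon> *\<^sub>R (p - x))) \<longlongrightarrow> a h \<bullet> (p + 0 *\<^sub>R (p - x))) (at_right 0)"
      by (intro tendsto_intros)
    then show "eventually (\<lambda>\<epsilon>. a h \<bullet> (p + \<epsilon> *\<^sub>R (p - x)) < b h) (at_right 0)"
      using strict \<open>h \<in> H - J\<close> by (intro order_tendstoD(2)) auto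
  qed
  then have "eventually (\<lambda>\<epsilon>. \<forall>h\<in>H - J. a h \<bullet> (p + \<epsilon> *\<^sub>R (p - x)) < b h) (at_right (0::real))"
    using H by (simp add: eventually_ball_finite_distrib)
  then obtain e where "e > 0" "\<forall>\<epsilon>>0. \<epsilon> < e \<longrightarrow> (\<forall>h\<in>H - J. a h \<bullet> (p + \<epsilon> *\<^sub>R (p - x)) < b h)"
    unfolding eventually_at_right_field by auto
  then have "e / 2 > 0" and strict': "\<forall>h\<in>H - J. a h \<bullet> (p + (e / 2) *\<^sub>R (p - x)) < b h"
    by auto
  moreover have "a h \<bullet> (p + (e / 2) *\<^sub>R (p - x)) \<le> b h" if "h \<in> H" for h
  proof (cases "h \<in> J")
    case True
    then show ?thesis using J by (simp add: inner_add_right inner_diff_right)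
  next
    case False
    then show ?thesis using strict' that by (simp add: less_imp_le)
  qed
  ultimately show ?thesis using that by blast
qed

lemma convex_hull_positive_combination:
  assumes "q \<in> convex hull Z"
  obtains W w where "finite W" "W \<subseteq> Z" "\<forall>v\<in>W. w v > 0" "sum w W = 1" "(\<Sum>v\<in>W. w v *\<^sub>R v) = q"
proof -
  obtain W w where W: "finite W" "W \<subseteq> Z" "\<forall>v\<in>W. 0 \<le> w v" "sum w W = 1" "(\<Sum>v\<in>W. w v *\<^sub>R v) = q"
    using assms unfolding convex_hull_explicit by blast
  define W' where "W' = {v\<in>W. w v > 0}"
  have sub: "W' \<subseteq> W" and zero: "\<forall>v\<in>W - W'. w v = 0" using W(3) by (force simp: W'_def)+
  have "sum w W' = sum w W" "(\<Sum>v\<in>W'. w v *\<^sub>R v) = (\<Sum>v\<in>W. w v *\<^sub>R v)"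
    using zero by (intro sum.mono_neutral_left[OF W(1) sub]; simp)+
  moreover have "\<forall>v\<in>W'. w v > 0" by (simp add: W'_def)
  ultimately show ?thesis
    using that[of W' w] W(2,4,5) sub finite_subset[OF sub W(1)] by auto
qed

lemma convex_hull_beyond:
  fixes p x :: "'a::real_vector"
  assumes q: "p + \<epsilon> *\<^sub>R (p - x) \<in> convex hull Z" and x: "x \<in> Z" and \<epsilon>: "\<epsilon> > 0"
  obtains U \<beta> where "finite U" "U \<subseteq> Z" "x \<in> U" "\<forall>u\<in>U. \<beta> u > 0" "sum \<beta> U = 1"
    "(\<Sum>u\<in>U. \<beta> u *\<^sub>R u) = p"
proof -
  obtain W w where W: "finite W" "W \<subseteq> Z" "\<forall>v\<in>W. w v > 0" "sum w W = 1"
    "(\<Sum>v\<in>W. w v *\<^sub>R v) = p + \<epsilon> *\<^sub>R (p - x)"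
    using convex_hull_positive_combination[OF q] by blast
  define U where "U = insert x W"
  define w' where "w' v = (if v \<in> W then w v else 0)" for v
  define \<beta> where "\<beta> v = (w' v + (if v = x then \<epsilon> else 0)) / (1 + \<epsilon>)" for v
  have U: "finite U" "U \<subseteq> Z" "x \<in> U" using W x by (auto simp: U_def)
  have "sum w' U = sum w W" "(\<Sum>v\<in>U. w' v *\<^sub>R v) = (\<Sum>v\<in>W. w v *\<^sub>R v)"
    by (rule sum.mono_neutral_cong_right[OF U(1)]; force simp: U_def w'_def)+
  then have w': "sum w' U = 1" "(\<Sum>v\<in>U. w' v *\<^sub>R v) = p + \<epsilon> *\<^sub>R (p - x)"
    using W(4,5) by simp_all
  have x_term: "(\<Sum>v\<in>U. (if v = x then \<epsilon> else 0) *\<^sub>R v) = \<epsilon> *\<^sub>R x"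
    using U(1,3) by (simp add: if_distrib[of "\<lambda>c. c *\<^sub>R _"] cong: if_cong)
  have \<beta>1: "sum \<beta> U = 1"
    unfolding \<beta>_def using w'(1) U \<epsilon> by (simp add: sum.distrib flip: sum_divide_distrib)
  have "(\<Sum>u\<in>U. \<beta> u *\<^sub>R u) =
      (1 / (1 + \<epsilon>)) *\<^sub>R (\<Sum>v\<in>U. (w' v + (if v = x then \<epsilon> else 0)) *\<^sub>R v)"
    by (simp add: \<beta>_def scaleR_sum_right)
  also have "\<dots> = (1 / (1 + \<epsilon>)) *\<^sub>R
      ((\<Sum>v\<in>U. w' v *\<^sub>R v) + (\<Sum>v\<in>U. (if v = x then \<epsilon> else 0) *\<^sub>R v))"
    by (simp only: scaleR_add_left sum.distrib)
  also have "\<dots> = (1 / (1 + \<epsilon>)) *\<^sub>R ((1 + \<epsilon>) *\<^sub>R p)"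
    unfolding w'(2) x_term by (simp add: algebra_simps)
  also have "\<dots> = p" using \<epsilon> by simp
  finally have \<beta>p: "(\<Sum>u\<in>U. \<beta> u *\<^sub>R u) = p" .
  have "\<forall>u\<in>U. \<beta> u > 0" using W(3) \<epsilon> by (auto simp: \<beta>_def w'_def U_def add_pos_nonneg)
  then show ?thesis using that U \<beta>1 \<beta>p by blast
qed

lemma meets_relint_barycentre:
  fixes U S Y :: "(real ^ 'n) set"
  assumes F: "real_subfield F" and U: "finite U" "U \<subseteq> coords_in F"
    and S: "finite S" "S \<noteq> {}" "S \<subseteq> Y" "S \<subseteq> coords_in F"
    and \<beta>: "\<forall>u\<in>U. \<beta> u > 0" "sum \<beta> U = 1" "(\<Sum>u\<in>U. \<beta> u *\<^sub>R u) = barycentre S"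
  shows "meets_relint F Y U"
proof -
  have card: "real (card S) > 0" using S by (simp add: card_gt_0_iff)
  obtain \<beta>' \<alpha>' where \<beta>': "\<forall>u\<in>U. \<beta>' u \<in> F \<and> \<beta>' u > 0" "sum \<beta>' U = 1"
    and \<alpha>': "\<forall>s\<in>S. \<alpha>' s \<in> F \<and> \<alpha>' s \<ge> 0" "sum \<alpha>' S = 1"
    and eq: "(\<Sum>u\<in>U. \<beta>' u *\<^sub>R u) = (\<Sum>s\<in>S. \<alpha>' s *\<^sub>R s)"
    using subfield_reweighting[OF F U(1) S(1) U(2) S(4) \<beta>(1,2), of "\<lambda>_. 1 / real (card S)"]
      card \<beta>(3) by (auto simp: barycentre_def)
  have "(\<Sum>s\<in>S. \<alpha>' s *\<^sub>R s) \<in> conv_K F Y"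
    unfolding conv_K_def using S \<alpha>' by blast
  moreover have "(\<Sum>s\<in>S. \<alpha>' s *\<^sub>R s) \<in> relint_K F (conv_K F U)"
    using positive_combination_relint_K[OF F U(1) \<beta>'] eq by simp
  ultimately show ?thesis unfolding meets_relint_def by blast
qed

text \<open>Summing the defining inequalities that are tight on all of \<open>Y\<close> gives a functional \<open>\<phi>\<close> with
  maximum \<open>M\<close> over \<open>conv Z\<close> attained on \<open>Y\<close>. Every \<open>x \<in> Z\<close> with \<open>\<phi> x = M\<close> lies on the
  smallest face containing \<open>Y\<close>, so the barycentre \<open>p\<close> of suitable points of \<open>Y\<close> can be pushed
  beyond \<open>p\<close> away from \<open>x\<close> inside \<open>conv Z\<close>; this exhibits \<open>p\<close> as a positive combination of
  points \<open>U \<subseteq> Z\<close> containing \<open>x\<close>, hence \<open>conv_F Y\<close> meets the relative \<open>F\<close>-interior of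
  \<open>conv_F U\<close>.\<close>
lemma exposing_functional:
  fixes Z Y :: "(real ^ 'n) set"
  assumes F: "real_subfield F" and ZF: "Z \<subseteq> coords_in F"
    and poly: "polyhedron (convex hull Z)" and YZ: "Y \<subseteq> Z" and Y: "Y \<noteq> {}"
  obtains \<phi> :: "real ^ 'n \<Rightarrow> real" and M where "linear \<phi>" "\<forall>x\<in>convex hull Z. \<phi> x \<le> M"
    "\<forall>y\<in>Y. \<phi> y = M" "\<forall>x\<in>Z. \<phi> x = M \<longrightarrow> (\<exists>U. U \<subseteq> Z \<and> x \<in> U \<and> meets_relint F Y U)"
proof -
  obtain H and a :: "(real ^ 'n) set \<Rightarrow> real ^ 'n" and b
    where H: "finite H" and P_eq: "convex hull Z = {x. \<forall>h\<in>H. a h \<bullet> x \<le> b h}"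
    using polyhedron_inequalities[OF poly] by blast
  have P: "x \<in> convex hull Z \<longleftrightarrow> (\<forall>h\<in>H. a h \<bullet> x \<le> b h)" for x
    by (simp add: P_eq)
  have ZP: "\<forall>z\<in>Z. \<forall>h\<in>H. a h \<bullet> z \<le> b h" using P hull_subset[of Z convex] by blast
  then have YP: "\<forall>y\<in>Y. \<forall>h\<in>H. a h \<bullet> y \<le> b h" using YZ by blast
  define J where "J = {h\<in>H. \<forall>y\<in>Y. a h \<bullet> y = b h}"
  obtain S where S: "finite S" "S \<subseteq> Y" "S \<noteq> {}" "\<forall>h\<in>J. a h \<bullet> barycentre S = b h"
    "\<forall>h\<in>H - J. a h \<bullet> barycentre S < b h"
    using barycentre_strict[OF H Y YP] unfolding J_def by blast
  define \<phi> where "\<phi> x = (\<Sum>h\<in>J. a h) \<bullet> x" for x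
  define M where "M = sum b J"
  have J: "finite J" "J \<subseteq> H" using H by (auto simp: J_def)
  have valid: "\<forall>h\<in>J. a h \<bullet> x \<le> b h" if "x \<in> convex hull Z" for x using that P J(2) by blast
  have "linear \<phi>" unfolding \<phi>_def by (rule bounded_linear.linear[OF bounded_linear_inner_right])
  moreover have "\<forall>x\<in>convex hull Z. \<phi> x \<le> M"
    using sum_inequalities(1)[OF J(1) valid] by (simp add: \<phi>_def M_def)
  moreover have "\<phi> y = M" if y: "y \<in> Y" for y
  proof -
    have le: "\<forall>h\<in>J. a h \<bullet> y \<le> b h" and eq: "\<forall>h\<in>J. a h \<bullet> y = b h"
      using YP y J(2) by (auto simp: J_def)
    show ?thesis using sum_inequalities(2)[OF J(1) le] eq by (simp add: \<phi>_def M_def)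
  qed
  moreover have "\<exists>U. U \<subseteq> Z \<and> x \<in> U \<and> meets_relint F Y U" if x: "x \<in> Z" "\<phi> x = M" for x
  proof -
    have "\<forall>h\<in>J. a h \<bullet> x = b h"
      using sum_inequalities(2)[OF J(1) valid[OF hull_inc[OF x(1)]]] x(2) by (simp add: \<phi>_def M_def)
    then have "\<forall>h\<in>J. a h \<bullet> barycentre S = b h \<and> a h \<bullet> x = b h" using S(4) by blast
    then obtain \<epsilon> where \<epsilon>: "\<epsilon> > 0"
      "\<forall>h\<in>H. a h \<bullet> (barycentre S + \<epsilon> *\<^sub>R (barycentre S - x)) \<le> b h"
      using move_beyond[OF H _ S(5)] by blast
    then have "barycentre S + \<epsilon> *\<^sub>R (barycentre S - x) \<in> convex hull Z" by (simp add: P)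
    then obtain U \<beta> where U: "finite U" "U \<subseteq> Z" "x \<in> U" "\<forall>u\<in>U. \<beta> u > 0" "sum \<beta> U = 1"
      "(\<Sum>u\<in>U. \<beta> u *\<^sub>R u) = barycentre S"
      by (rule convex_hull_beyond[OF _ x(1) \<epsilon>(1)])
    have "U \<subseteq> coords_in F" "S \<subseteq> coords_in F" using U(2) S(2) YZ ZF by auto
    then have "meets_relint F Y U"
      using meets_relint_barycentre[OF F U(1) _ S(1,3,2) _ U(4-6)] by blast
    then show ?thesis using U(2,3) by blast
  qed
  ultimately show ?thesis using that by blast
qed

text \<open>Apply the construction to \<open>Z = X \<union> {0}\<close>: a point of \<open>Z\<close> on
  the exposed face lies in some \<open>U\<close> whose relative \<open>F\<close>-interior meets \<open>conv_F Y\<close>; positivity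
  excludes \<open>0 \<in> U\<close>, and the weak face property then puts \<open>U\<close> inside \<open>Y\<close>. In particular \<open>0\<close>
  is not on the face, so \<open>M > \<phi> 0 = 0\<close>.\<close>
lemma positive_weak_face_exposed:
  fixes X Y :: "(real ^ 'n) set"
  assumes F: "real_subfield F" and XF: "X \<subseteq> coords_in F"
    and poly: "polyhedron (convex hull (X \<union> {0}))"
    and pos: "positive_weak_face F Y X" and Y: "Y \<noteq> {}"
  shows "\<exists>\<phi> :: real ^ 'n \<Rightarrow> real. \<exists>M. linear \<phi> \<and> M > 0 \<and> (\<exists>x\<in>X. \<phi> x = M) \<and>
    (\<forall>x\<in>X. \<phi> x \<le> M) \<and> Y = {x \<in> X. \<phi> x = M}"
proof -
  have YX: "Y \<subseteq> X" and face: "\<And>U. U \<subseteq> X \<Longrightarrow> meets_relint F Y U \<Longrightarrow> U \<subseteq> Y"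
    and avoid0: "\<And>U. U \<subseteq> X \<Longrightarrow> \<not> meets_relint F Y (U \<union> {0})"
    using pos unfolding positive_weak_face_iff weak_face_iff by blast+
  define Z where "Z = insert 0 X"
  have ZF: "Z \<subseteq> coords_in F" using XF subfield_0[OF F] by (auto simp: Z_def coords_in_def)
  have "polyhedron (convex hull Z)" using poly by (simp add: Z_def)
  moreover have "Y \<subseteq> Z" using YX by (auto simp: Z_def)
  ultimately obtain \<phi> :: "real ^ 'n \<Rightarrow> real" and M where lin: "linear \<phi>"
    and le: "\<forall>x\<in>convex hull Z. \<phi> x \<le> M" and on_Y: "\<forall>y\<in>Y. \<phi> y = M"
    and reach: "\<forall>x\<in>Z. \<phi> x = M \<longrightarrow> (\<exists>U. U \<subseteq> Z \<and> x \<in> U \<and> meets_relint F Y U)"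
    using exposing_functional[OF F ZF _ _ Y] by blast
  have on_face: "x \<in> Y \<and> x \<noteq> 0" if x: "x \<in> Z" "\<phi> x = M" for x
  proof -
    obtain U where U: "U \<subseteq> Z" "x \<in> U" "meets_relint F Y U" using reach x by blast
    have "U - {0} \<subseteq> X" using U(1) by (auto simp: Z_def)
    moreover have "0 \<notin> U"
      using avoid0[OF \<open>U - {0} \<subseteq> X\<close>] U(3) by (metis insert_Diff_single insert_absorb sup_commute
          insert_is_Un)
    ultimately show ?thesis using face U(2,3) by auto
  qed
  have "\<phi> 0 = 0" using lin by (simp add: linear_0)
  moreover have "0 \<in> convex hull Z" by (simp add: Z_def hull_inc)
  ultimately have "M > 0" using le on_face[of 0] by (force simp: Z_def)
  moreover have "\<forall>x\<in>X. \<phi> x \<le> M" using le by (auto simp: Z_def hull_inc)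
  moreover have "Y = {x \<in> X. \<phi> x = M}" using on_Y YX on_face by (auto simp: Z_def)
  ultimately show ?thesis using lin Y by blast
qed

text \<open>When \<open>0 \<in> conv X\<close>, no linear functional has a positive constant value on \<open>X\<close>; hence \<open>X\<close>
  itself is not a positive weak face of \<open>X\<close>.\<close>
lemma whole_not_positive_weak_face:
  fixes X :: "(real ^ 'n) set"
  assumes F: "real_subfield F" and XF: "X \<subseteq> coords_in F"
    and poly: "polyhedron (convex hull (X \<union> {0}))"
    and zero: "0 \<in> convex hull X" and X: "X \<noteq> {}"
  shows "\<not> positive_weak_face F X X"
proof
  assume "positive_weak_face F X X"
  then obtain \<phi> :: "real ^ 'n \<Rightarrow> real" and M
    where lin: "linear \<phi>" and M: "M > 0" and X_eq: "X = {x \<in> X. \<phi> x = M}"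
    using positive_weak_face_exposed[OF F XF poly _ X] by blast
  have "\<phi> 0 = M"
    using conv_K_functional(2)[OF lin, of 0 UNIV X M] zero X_eq by (auto simp: conv_K_UNIV)
  then show False using lin M by (simp add: linear_0)
qed

text \<open>If \<open>0\<close> is in the relative interior of \<open>conv X\<close>, a linear functional bounded by \<open>M\<close> on \<open>X\<close>
  and not constant on \<open>X\<close> has \<open>M > 0\<close>: the hull contains a point \<open>(1 - e) x\<^sub>1\<close> with \<open>e > 1\<close>
  on the far side of \<open>0\<close> from any \<open>x\<^sub>1 \<in> X\<close>.\<close>
lemma rel_interior_zero_bound_pos:
  fixes \<phi> :: "'a::euclidean_space \<Rightarrow> real"
  assumes ri: "0 \<in> rel_interior (convex hull X)" and lin: "linear \<phi>"
    and le: "\<forall>x\<in>X. \<phi> x \<le> M" and x1: "x1 \<in> X" "\<phi> x1 < M"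
  shows "M > 0"
proof -
  obtain e where e: "e > 1" "(1 - e) *\<^sub>R x1 + e *\<^sub>R 0 \<in> convex hull X"
    using ri x1(1) hull_inc[of x1 X] convex_rel_interior_iff[of "convex hull X" 0] by blast
  have "\<phi> ((1 - e) *\<^sub>R x1) \<le> M"
    using conv_K_functional(1)[OF lin, of "(1 - e) *\<^sub>R x1" UNIV X M] e(2) le
    by (simp add: conv_K_UNIV)
  then have "(1 - e) * \<phi> x1 \<le> M" using lin by (simp add: linear_scale)
  show "M > 0"
  proof (rule ccontr)
    assume "\<not> M > 0"
    then have "(1 - e) * \<phi> x1 > 0" using e(1) x1(2) by (intro mult_neg_neg) auto
    then show False using \<open>(1 - e) * \<phi> x1 \<le> M\<close> \<open>\<not> M > 0\<close> by linarith
  qed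
qed

text \<open>Converse direction of the second statement: with \<open>0\<close> in the relative interior of \<open>conv X\<close>,
  every proper weak \<open>F\<close>-face is exposed by a functional with positive maximum, hence positive.\<close>
lemma proper_weak_face_positive:
  fixes X Y :: "(real ^ 'n) set"
  assumes F: "real_subfield F" and XF: "X \<subseteq> coords_in F"
    and poly: "polyhedron (convex hull X)" and ri: "0 \<in> rel_interior (convex hull X)"
    and wf: "weak_face F Y X" and proper: "Y \<noteq> X"
  shows "positive_weak_face F Y X"
proof (cases "Y = {}")
  case True
  then show ?thesis using wf by (simp add: positive_weak_face_iff meets_relint_def conv_K_empty)
next
  case False
  have YX: "Y \<subseteq> X" and face: "\<And>U. U \<subseteq> X \<Longrightarrow> meets_relint F Y U \<Longrightarrow> U \<subseteq> Y"
    using wf unfolding weak_face_iff by blast+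
  obtain \<phi> :: "real ^ 'n \<Rightarrow> real" and M where lin: "linear \<phi>"
    and le: "\<forall>x\<in>convex hull X. \<phi> x \<le> M" and on_Y: "\<forall>y\<in>Y. \<phi> y = M"
    and reach: "\<forall>x\<in>X. \<phi> x = M \<longrightarrow> (\<exists>U. U \<subseteq> X \<and> x \<in> U \<and> meets_relint F Y U)"
    using exposing_functional[OF F XF poly YX False] by blast
  have le_X: "\<forall>x\<in>X. \<phi> x \<le> M" by (simp add: le hull_inc)
  have on_face: "x \<in> Y" if "x \<in> X" "\<phi> x = M" for x
    using reach face that by blast
  obtain x1 where "x1 \<in> X" "x1 \<notin> Y" using proper YX by blast
  then have "\<phi> x1 < M" using le_X on_face by force
  then have "M > 0" using rel_interior_zero_bound_pos[OF ri lin le_X \<open>x1 \<in> X\<close>] by blast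
  moreover have "Y = {x \<in> X. \<phi> x = M}" using on_Y YX on_face by blast
  ultimately show ?thesis using exposed_positive_weak_face[OF F lin _ le_X] by blast
qed

theorem theorem4p7:
  fixes F :: "real set" and X :: "(real ^ 'n) set"
  assumes "real_subfield F"
    and "X \<subseteq> coords_in F"
    and "polyhedron (convex hull (X \<union> {0}))"
  shows "(\<forall>Y. Y \<subseteq> X \<and> Y \<noteq> {} \<longrightarrow>
            (positive_weak_face F Y X \<longleftrightarrow>
              (\<exists>\<phi> :: real ^ 'n \<Rightarrow> real. \<exists>M. linear \<phi> \<and> M > 0 \<and>
                 (\<exists>x\<in>X. \<phi> x = M) \<and> (\<forall>x\<in>X. \<phi> x \<le> M) \<and>
                 Y = {x \<in> X. \<phi> x = M})))
       \<and> (0 \<in> rel_interior (convex hull X) \<longrightarrow>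
            (\<forall>Y. Y \<subseteq> X \<longrightarrow>
              (positive_weak_face F Y X \<longleftrightarrow> Y \<noteq> X \<and> weak_face F Y X)))"
proof (intro conjI allI impI)
  fix Y assume Y: "Y \<subseteq> X \<and> Y \<noteq> {}"
  show "positive_weak_face F Y X \<longleftrightarrow> (\<exists>\<phi> :: real ^ 'n \<Rightarrow> real. \<exists>M. linear \<phi> \<and> M > 0 \<and>
      (\<exists>x\<in>X. \<phi> x = M) \<and> (\<forall>x\<in>X. \<phi> x \<le> M) \<and> Y = {x \<in> X. \<phi> x = M})"
    using positive_weak_face_exposed[OF assms _ conjunct2[OF Y]]
      exposed_positive_weak_face[OF assms(1)] by (elim iffI exE conjE) blast+
next
  fix Y assume ri: "0 \<in> rel_interior (convex hull X)" and "Y \<subseteq> X"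
  have zero: "0 \<in> convex hull X" using ri rel_interior_subset by blast
  then have "polyhedron (convex hull X)"
    using assms(3) hull_redundant_eq[of 0 convex X] by simp
  moreover have "X \<noteq> {}" using zero by auto
  ultimately show "positive_weak_face F Y X \<longleftrightarrow> Y \<noteq> X \<and> weak_face F Y X"
    using whole_not_positive_weak_face[OF assms zero] proper_weak_face_positive[OF assms(1,2) _ ri]
    by (auto simp: positive_weak_face_iff)
qed

end
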